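(* Let $v=(x,y)\in T$ be a point with at least one irrational coordinate. Then $G^k(v)\neq(0,0)$ for all $k\ge0$, so its itinerary is defined, and: the itinerary of $v$ consists only of symbols of type $\mathbb{A}$ if and only if $y = 0$. Moreover, if the itinerary is $\mathbb{A}_{a_1},\mathbb{A}_{a_2},\dots$, then $x = [0;a_1,a_2,\dots]$ (regular continued fraction).
   Context: Let $T = \{(x,y)\in\mathbb{R}^2 : 0 \le y \le x \le 1\}$. For integers $n\ge1$ define $\mathbb{A}_n = \{(x,y) : \frac{1}{n+1} < x \le \frac1n,\ 0 \le y \le 1-nx\}$ and $\mathbb{B}_n = \{(x,y) : 1-nx < y \le x \le \frac1n\}$; these together with $\{(0,0)\}$ partition $T$. The 2-dimensional Gauss map $G:T\to T$ is $G(0,0)=(0,0)$, $G(x,y)=\left(\frac1x-n,\frac yx\right)$ on $\mathbb{A}_n$, $G(x,y)=\left(\frac{1-y}{x}-n+1,\frac{x-y}{x}\right)$ on $\mathbb{B}_n$. For a point $v$ whose forward orbit never hits $(0,0)$, its itinerary is the sequence of symbols $\mathbb{X}_{a_1},\mathbb{X}_{a_2},\dots$ ($\mathbb{X}\in\{\mathbb{A},\mathbb{B}\}$, $a_k\ge1$) with $G^{k-1}(v)\in\mathbb{X}_{a_k}$ for all $k\ge1$. *)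

theory Defs
  imports Complex_Main
begin

definition Tset :: "(real \<times> real) set" where
  "Tset = {(x, y). 0 \<le> y \<and> y \<le> x \<and> x \<le> 1}"

definition Aset :: "nat \<Rightarrow> (real \<times> real) set" where
  "Aset n = {(x, y). 1 / real (n + 1) < x \<and> x \<le> 1 / real n \<and> 0 \<le> y \<and> y \<le> 1 - real n * x}"

definition Bset :: "nat \<Rightarrow> (real \<times> real) set" where
  "Bset n = {(x, y). 1 - real n * x < y \<and> y \<le> x \<and> x \<le> 1 / real n}"

text \<open>The 2-dimensional Gauss map (on points outside T it is set to (0,0)).\<close>
definition Gmap :: "real \<times> real \<Rightarrow> real \<times> real" where
  "Gmap v = (let x = fst v; y = snd v in
     if v = (0, 0) then (0, 0)
     else if \<exists>n\<ge>1. v \<in> Aset n then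
       (let n = (THE n. n \<ge> 1 \<and> v \<in> Aset n) in (1 / x - real n, y / x))
     else if \<exists>n\<ge>1. v \<in> Bset n then
       (let n = (THE n. n \<ge> 1 \<and> v \<in> Bset n) in ((1 - y) / x - real n + 1, (x - y) / x))
     else (0, 0))"

text \<open>Finite continued fraction [0; a 0, a 1, ..., a (n-1)] (0-based indexing of partial quotients).\<close>
fun cfrac :: "(nat \<Rightarrow> nat) \<Rightarrow> nat \<Rightarrow> real" where
  "cfrac a 0 = 0"
| "cfrac a (Suc n) = 1 / (real (a 0) + cfrac (\<lambda>k. a (Suc k)) n)"

definition is_cf_value :: "(nat \<Rightarrow> nat) \<Rightarrow> real \<Rightarrow> bool" where
  "is_cf_value a x \<longleftrightarrow> (\<lambda>n. cfrac a n) \<longlonglongrightarrow> x"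

end

theory Submission
  imports Defs
begin

text \<open>
  Both pieces \<open>A\<^sub>n\<close> and \<open>B\<^sub>n\<close> lie in the strip \<open>\<lfloor>1/x\<rfloor> = n\<close>, on which \<open>G\<close> is a
  fractional linear map with rational coefficients. Hence \<open>G\<close> maps \<open>T\<close> into itself and a point
  with an irrational coordinate to another such point, so the orbit never reaches the origin.
  On \<open>A\<^sub>n\<close> the second coordinate becomes \<open>y/x\<close>, and two consecutive first coordinates
  satisfy \<open>x x' = 1 - n x \<le> 1/2\<close>; along an itinerary of \<open>A\<close>-symbols \<open>y\<close> therefore at least
  doubles every two steps while staying in \<open>[0,1]\<close>, which forces \<open>y = 0\<close>. Conversely
  \<open>y = 0\<close> excludes every \<open>B\<^sub>n\<close> and is preserved by \<open>G\<close>.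
  Along such an itinerary \<open>x\<^sub>k = 1/(a\<^sub>k + x\<^sub>k\<^sub>+\<^sub>1)\<close>, so \<open>x = [0; a\<^sub>0, \<dots>, a\<^sub>n\<^sub>-\<^sub>1 + x\<^sub>n]\<close>;
  two steps of \<open>t \<mapsto> 1/(a + t)\<close> contract distances by a factor 4, so the convergents
  approach \<open>x\<close> at rate \<open>2\<^sup>-\<^sup>n\<close>.
\<close>

lemma Aset_iff:
  "(x, y) \<in> Aset n \<longleftrightarrow>
     n \<ge> 1 \<and> 0 < x \<and> \<lfloor>1 / x\<rfloor> = int n \<and> 0 \<le> y \<and> y \<le> 1 - real n * x"
proof (cases "n = 0")
  case False
  then have "real n > 0" by simp
  then show ?thesis
    unfolding Aset_def floor_eq_iff
    by (auto simp: field_simps intro: order.strict_trans2[of _ "1 / real (n + 1)"])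
qed (auto simp: Aset_def)

lemma Bset_iff:
  "(x, y) \<in> Bset n \<longleftrightarrow>
     n \<ge> 1 \<and> 0 < x \<and> \<lfloor>1 / x\<rfloor> = int n \<and> 1 - real n * x < y \<and> y \<le> x"
proof (cases "n = 0")
  case False
  then have "real n > 0" by simp
  then show ?thesis
    unfolding Bset_def floor_eq_iff by (auto simp: field_simps)
qed (auto simp: Bset_def)

lemma Aset_index_ge_1: "p \<in> Aset n \<Longrightarrow> n \<ge> 1"
  by (cases p) (simp add: Aset_iff)

lemma Aset_unique: "p \<in> Aset n \<Longrightarrow> p \<in> Aset m \<Longrightarrow> n = m"
  by (cases p) (auto simp: Aset_iff)

lemma Bset_unique: "p \<in> Bset n \<Longrightarrow> p \<in> Bset m \<Longrightarrow> n = m"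
  by (cases p) (auto simp: Bset_iff)

lemma Aset_Bset_disjoint: "p \<in> Aset n \<Longrightarrow> p \<notin> Bset m"
  by (cases p) (auto simp: Aset_iff Bset_iff)

lemma Gmap_Aset: "(x, y) \<in> Aset n \<Longrightarrow> Gmap (x, y) = (1 / x - real n, y / x)"
proof -
  assume A: "(x, y) \<in> Aset n"
  then have "n \<ge> 1" "(x, y) \<noteq> (0, 0)" by (auto simp: Aset_iff)
  moreover have "(THE m. m \<ge> 1 \<and> (x, y) \<in> Aset m) = n"
    using A \<open>n \<ge> 1\<close> by (blast intro: Aset_unique)
  ultimately show ?thesis
    using A unfolding Gmap_def Let_def by auto
qed

lemma Gmap_Bset:
  "(x, y) \<in> Bset n \<Longrightarrow> Gmap (x, y) = ((1 - y) / x - real n + 1, (x - y) / x)"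
proof -
  assume B: "(x, y) \<in> Bset n"
  then have "n \<ge> 1" "(x, y) \<noteq> (0, 0)" by (auto simp: Bset_iff)
  moreover have "(THE m. m \<ge> 1 \<and> (x, y) \<in> Bset m) = n"
    using B \<open>n \<ge> 1\<close> by (blast intro: Bset_unique)
  ultimately show ?thesis
    using B Aset_Bset_disjoint unfolding Gmap_def Let_def by auto
qed

lemma Tset_cover:
  assumes "(x, y) \<in> Tset" "(x, y) \<noteq> (0, 0)"
  obtains n where "(x, y) \<in> Aset n" | n where "(x, y) \<in> Bset n"
proof -
  have "0 \<le> y" "y \<le> x" "x \<le> 1" "x \<noteq> 0"
    using assms by (auto simp: Tset_def)
  then have "0 < x" "1 \<le> 1 / x" by auto
  then have "\<lfloor>1 / x\<rfloor> \<ge> 1" by (simp add: le_floor_iff)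
  then have "\<lfloor>1 / x\<rfloor> = int (nat \<lfloor>1 / x\<rfloor>)" "nat \<lfloor>1 / x\<rfloor> \<ge> 1" by arith+
  then show ?thesis
    using that \<open>0 < x\<close> \<open>0 \<le> y\<close> \<open>y \<le> x\<close>
    unfolding Aset_iff Bset_iff by (meson not_le)
qed

lemma Aset_subset_Tset: "Aset n \<subseteq> Tset"
proof clarify
  fix x y assume "(x, y) \<in> Aset n"
  then have "n \<ge> 1" "0 < x" "real n \<le> 1 / x" "1 / x < real n + 1"
    and "0 \<le> y" "y \<le> 1 - real n * x"
    unfolding Aset_iff floor_eq_iff by auto
  then have "real n * x \<le> 1" "1 < real n * x + x" "x \<le> real n * x"
    using mult_right_mono[of 1 "real n" x] by (simp_all add: field_simps)
  then have "y \<le> x" "x \<le> 1"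
    using \<open>y \<le> 1 - real n * x\<close> by linarith+
  then show "(x, y) \<in> Tset"
    unfolding Tset_def using \<open>0 \<le> y\<close> by simp
qed

lemma Gmap_Aset_in_Tset: "(x, y) \<in> Aset n \<Longrightarrow> Gmap (x, y) \<in> Tset"
proof -
  assume A: "(x, y) \<in> Aset n"
  then have "0 < x" "real n \<le> 1 / x" "1 / x < real n + 1" "0 \<le> y" "y \<le> 1 - real n * x"
    unfolding Aset_iff floor_eq_iff by auto
  then show ?thesis
    unfolding Gmap_Aset[OF A] Tset_def by (auto simp: field_simps)
qed

lemma Gmap_Bset_in_Tset: "(x, y) \<in> Bset n \<Longrightarrow> Gmap (x, y) \<in> Tset"
proof -
  assume B: "(x, y) \<in> Bset n"
  then have "0 < x" "real n \<le> 1 / x" "1 - real n * x < y" "y \<le> x"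
    unfolding Bset_iff floor_eq_iff by auto
  then show ?thesis
    unfolding Gmap_Bset[OF B] Tset_def by (auto simp: field_simps)
qed

lemma Gmap_in_Tset: "p \<in> Tset \<Longrightarrow> Gmap p \<in> Tset"
proof (cases "p = (0, 0)")
  case True
  then show ?thesis by (simp add: Gmap_def Tset_def)
next
  case False
  moreover assume "p \<in> Tset"
  ultimately show ?thesis
    by (cases p) (metis Tset_cover Gmap_Aset_in_Tset Gmap_Bset_in_Tset)
qed

lemma Rats_of_inverse_and_ratio:
  fixes x y :: real
  assumes "x \<noteq> 0" "1 / x \<in> \<rat>" "y / x \<in> \<rat>"
  shows "(x, y) \<in> \<rat> \<times> \<rat>"
proof -
  have "x = 1 / (1 / x)" "y = y / x * x" using assms(1) by simp_all
  then show ?thesis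
    using assms(2,3) by (metis Rats_divide Rats_mult Rats_1 mem_Times_iff fst_conv snd_conv)
qed

lemma Gmap_not_Rats:
  assumes "p \<in> Tset" "p \<notin> \<rat> \<times> \<rat>"
  shows "Gmap p \<notin> \<rat> \<times> \<rat>"
proof
  assume G: "Gmap p \<in> \<rat> \<times> \<rat>"
  obtain x y where p: "p = (x, y)" by fastforce
  have "p \<noteq> (0, 0)" using assms(2) by auto
  then consider n where "(x, y) \<in> Aset n" | n where "(x, y) \<in> Bset n"
    using Tset_cover assms(1) p by metis
  then have "x \<noteq> 0 \<and> 1 / x \<in> \<rat> \<and> y / x \<in> \<rat>"
  proof cases
    case 1
    then show ?thesis
      using G Gmap_Aset[OF 1] by (auto simp: p Aset_iff Rats_diff_iff)
  next
    case 2
    then have "x \<noteq> 0" by (simp add: Bset_iff)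
    then have "(x - y) / x = 1 - y / x" "(1 - y) / x - real n + 1 = 1 / x - y / x - real n + 1"
      by (simp_all add: field_simps)
    then show ?thesis
      using G Gmap_Bset[OF 2] \<open>x \<noteq> 0\<close> by (auto simp: p Rats_diff_iff Rats_add_iff)
  qed
  then show False
    using Rats_of_inverse_and_ratio assms(2) p by blast
qed

lemma funpow_Gmap_in_Tset: "p \<in> Tset \<Longrightarrow> (Gmap ^^ k) p \<in> Tset"
  by (induction k) (simp_all add: Gmap_in_Tset)

lemma funpow_Gmap_not_Rats:
  "p \<in> Tset \<Longrightarrow> p \<notin> \<rat> \<times> \<rat> \<Longrightarrow> (Gmap ^^ k) p \<notin> \<rat> \<times> \<rat>"
  by (induction k) (simp_all add: Gmap_not_Rats funpow_Gmap_in_Tset)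

lemma Tset_snd_zero_in_Aset:
  assumes "(x, 0) \<in> Tset" "x \<noteq> 0"
  obtains n where "(x, 0) \<in> Aset n"
proof -
  have "(x, 0) \<notin> Bset n" for n
  proof
    assume "(x, 0) \<in> Bset n"
    then have "0 < x" "real n \<le> 1 / x" "1 - real n * x < 0"
      by (auto simp: Bset_iff floor_eq_iff)
    then show False by (simp add: field_simps)
  qed
  then show ?thesis
    using Tset_cover[of x 0] assms that by auto
qed

lemma funpow_Gmap_in_Aset_if_snd_zero:
  assumes "p \<in> Tset" "p \<notin> \<rat> \<times> \<rat>" "snd p = 0"
  shows "\<exists>n. (Gmap ^^ k) p \<in> Aset n"
proof -
  have in_Aset: "\<exists>n. (Gmap ^^ k) p \<in> Aset n" if snd_zero: "snd ((Gmap ^^ k) p) = 0" for k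
  proof -
    obtain u where u: "(Gmap ^^ k) p = (u, 0)"
      using snd_zero by (metis prod.collapse)
    then have "(u, 0) \<in> Tset" "u \<noteq> 0"
      using funpow_Gmap_in_Tset[OF assms(1)] funpow_Gmap_not_Rats[OF assms(1,2)]
      by (metis, metis Rats_0 mem_Times_iff fst_conv snd_conv)
    then show ?thesis
      using Tset_snd_zero_in_Aset u by metis
  qed
  have "snd ((Gmap ^^ k) p) = 0"
  proof (induction k)
    case 0
    show ?case using assms(3) by simp
  next
    case (Suc k)
    then obtain n where "(Gmap ^^ k) p \<in> Aset n"
      using in_Aset by blast
    moreover obtain u v where "(Gmap ^^ k) p = (u, v)" by fastforce
    ultimately show ?case
      using Suc Gmap_Aset by simp
  qed
  then show ?thesis
    using in_Aset by blast
qed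

lemma snd_Gmap_Gmap_Aset_ge:
  assumes "p \<in> Aset n" "Gmap p \<in> Aset m"
  shows "2 * snd p \<le> snd (Gmap (Gmap p))"
proof -
  obtain x y where p: "p = (x, y)" by fastforce
  define x' where "x' = 1 / x - real n"
  have G: "Gmap p = (x', y / x)"
    using Gmap_Aset assms(1) by (simp add: p x'_def)
  have "n \<ge> 1" "0 < x" "1 / x < real n + 1" "0 \<le> y"
    using assms(1) by (auto simp: p Aset_iff floor_eq_iff)
  then have "1 < real n * x + x" "x \<le> real n * x"
    using mult_right_mono[of 1 "real n" x] by (simp_all add: field_simps)
  moreover have "x * x' = 1 - real n * x"
    using \<open>0 < x\<close> by (simp add: x'_def field_simps)
  ultimately have "x * x' \<le> 1 / 2" by linarith
  moreover have "0 < x'"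
    using assms(2) by (simp add: G Aset_iff)
  ultimately have "y / (1 / 2) \<le> y / (x * x')"
    using \<open>0 < x\<close> \<open>0 \<le> y\<close> by (intro divide_left_mono) simp_all
  then have "2 * y \<le> y / (x * x')" by simp
  also have "\<dots> = snd (Gmap (Gmap p))"
    using Gmap_Aset assms(2) by (simp add: G)
  finally show ?thesis by (simp add: p)
qed

lemma snd_zero_if_funpow_Gmap_in_Aset:
  assumes in_Aset: "\<forall>k. \<exists>n. (Gmap ^^ k) p \<in> Aset n"
  shows "snd p = 0"
proof -
  have in_Tset: "(Gmap ^^ k) p \<in> Tset" for k
    using in_Aset Aset_subset_Tset by blast
  have growth: "2 ^ k * snd p \<le> snd ((Gmap ^^ (2 * k)) p)" for k
  proof (induction k)
    case (Suc k)
    obtain n m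
      where "(Gmap ^^ (2 * k)) p \<in> Aset n" "Gmap ((Gmap ^^ (2 * k)) p) \<in> Aset m"
      using in_Aset by (metis funpow.simps(2) o_apply)
    then have "2 * snd ((Gmap ^^ (2 * k)) p) \<le> snd ((Gmap ^^ (2 * Suc k)) p)"
      using snd_Gmap_Gmap_Aset_ge by simp
    then show ?case
      using Suc by simp
  qed simp
  have "0 \<le> snd p" "snd ((Gmap ^^ k) p) \<le> 1" for k
    using in_Tset[of 0] in_Tset[of k] by (auto simp: Tset_def split: prod.splits)
  then have bounded: "2 ^ k * snd p \<le> 1" for k
    using growth order_trans by blast
  show "snd p = 0"
  proof (rule ccontr)
    assume "snd p \<noteq> 0"
    with \<open>0 \<le> snd p\<close> have "0 < snd p" by simp
    obtain k :: nat where "1 / snd p < 2 ^ k"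
      using real_arch_pow[of 2 "1 / snd p"] by auto
    with \<open>0 < snd p\<close> have "1 < 2 ^ k * snd p"
      by (simp add: field_simps)
    with bounded[of k] show False by simp
  qed
qed

fun cfrac_tail :: "(nat \<Rightarrow> nat) \<Rightarrow> nat \<Rightarrow> real \<Rightarrow> real" where
  "cfrac_tail a 0 t = t"
| "cfrac_tail a (Suc n) t = 1 / (real (a 0) + cfrac_tail (\<lambda>k. a (Suc k)) n t)"

lemma cfrac_eq_cfrac_tail: "cfrac a n = cfrac_tail a n 0"
  by (induction n arbitrary: a) simp_all

lemma cfrac_tail_nonneg: "0 \<le> t \<Longrightarrow> 0 \<le> cfrac_tail a n t"
  by (induction n arbitrary: a) simp_all

lemma cfrac_tail_le_1:
  assumes "a 0 \<ge> 1" "0 \<le> t" "t \<le> 1"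
  shows "cfrac_tail a n t \<le> 1"
proof (cases n)
  case (Suc m)
  have "1 \<le> real (a 0) + cfrac_tail (\<lambda>k. a (Suc k)) m t"
    using assms cfrac_tail_nonneg[of t] by (simp add: add_increasing2)
  then show ?thesis
    by (simp add: Suc)
qed (simp add: assms)

lemma dist_inverse_two_steps_le:
  fixes a c u w :: real
  assumes "a \<ge> 1" "c \<ge> 1" "0 \<le> u" "0 \<le> w"
  shows "\<bar>1 / (a + 1 / (c + u)) - 1 / (a + 1 / (c + w))\<bar> \<le> \<bar>u - w\<bar> / 4"
proof -
  have denom_ge_2: "2 \<le> a * (c + z) + 1" if "0 \<le> z" for z
    using mult_mono[of 1 a 1 "c + z"] assms that by simp
  have eq: "1 / (a + 1 / (c + z)) = (c + z) / (a * (c + z) + 1)" if "0 \<le> z" for z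
    using assms that by (simp add: field_simps)
  define D where "D = (a * (c + u) + 1) * (a * (c + w) + 1)"
  have "1 / (a + 1 / (c + u)) - 1 / (a + 1 / (c + w)) = (u - w) / D"
    using denom_ge_2[OF assms(3)] denom_ge_2[OF assms(4)]
    by (simp add: D_def eq assms diff_frac_eq algebra_simps)
  moreover have "2 * 2 \<le> D"
    unfolding D_def by (rule mult_mono) (use denom_ge_2 assms in auto)
  then have "\<bar>u - w\<bar> / \<bar>D\<bar> \<le> \<bar>u - w\<bar> / 4"
    by (intro divide_left_mono) auto
  ultimately show ?thesis
    by simp
qed

lemma cfrac_tail_dist_le:
  assumes "\<forall>k. a k \<ge> 1" "0 \<le> s" "s \<le> 1" "0 \<le> t" "t \<le> 1"
  shows "\<bar>cfrac_tail a n s - cfrac_tail a n t\<bar> \<le> 2 * (1 / 2) ^ n"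
  using assms(1)
proof (induction n arbitrary: a rule: nat_induct2)
  case 0
  then show ?case using assms by simp
next
  case 1
  then have "0 \<le> cfrac_tail a 1 s" "cfrac_tail a 1 s \<le> 1"
    "0 \<le> cfrac_tail a 1 t" "cfrac_tail a 1 t \<le> 1"
    using assms cfrac_tail_nonneg cfrac_tail_le_1 by presburger+
  then have "\<bar>cfrac_tail a 1 s - cfrac_tail a 1 t\<bar> \<le> 1"
    by (simp only: abs_le_iff) linarith
  then show ?case by simp
next
  case (step n)
  define b where "b = (\<lambda>k. a (Suc (Suc k)))"
  have unfold:
    "cfrac_tail a (n + 2) z = 1 / (real (a 0) + 1 / (real (a 1) + cfrac_tail b n z))" for z
    by (simp add: b_def numeral_2_eq_2)
  \<comment> \<open>A single step \<open>t \<mapsto> 1/(1 + t)\<close> is not a contraction near \<open>t = 0\<close>, hence steps of two.\<close>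
  have "\<bar>cfrac_tail a (n + 2) s - cfrac_tail a (n + 2) t\<bar>
      \<le> \<bar>cfrac_tail b n s - cfrac_tail b n t\<bar> / 4"
    unfolding unfold
    by (rule dist_inverse_two_steps_le) (use step.prems assms cfrac_tail_nonneg in auto)
  also have "\<dots> \<le> 2 * (1 / 2) ^ n / 4"
    using step.IH[of b] step.prems by (simp add: b_def)
  also have "\<dots> = 2 * (1 / 2) ^ (n + 2)"
    by simp
  finally show ?case .
qed

lemma is_cf_value_if_cfrac_tail:
  assumes "\<forall>k. a k \<ge> 1" and tail: "\<And>n. \<exists>t. 0 \<le> t \<and> t \<le> 1 \<and> x = cfrac_tail a n t"
  shows "is_cf_value a x"
proof -
  have bound: "\<bar>cfrac a n - x\<bar> \<le> 2 * (1 / 2) ^ n" for n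
    using tail[of n] cfrac_tail_dist_le[OF assms(1), of 0 _ n]
    by (auto simp: cfrac_eq_cfrac_tail)
  have "(\<lambda>n. 2 * (1 / 2 :: real) ^ n) \<longlonglongrightarrow> 0"
    by (intro tendsto_mult_right_zero LIMSEQ_power_zero) simp
  then have "(\<lambda>n. cfrac a n - x) \<longlonglongrightarrow> 0"
    by (rule tendsto_0_le[where K = 1]) (simp add: bound)
  then show ?thesis
    unfolding is_cf_value_def by (simp add: LIM_zero_iff)
qed

lemma fst_eq_cfrac_tail_funpow_Gmap:
  assumes "\<forall>k. (Gmap ^^ k) p \<in> Aset (a k)"
  shows "fst p = cfrac_tail a n (fst ((Gmap ^^ n) p))"
  using assms
proof (induction n arbitrary: p a)
  case (Suc n)
  obtain x y where p: "p = (x, y)" by fastforce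
  have "(x, y) \<in> Aset (a 0)"
    using Suc.prems[rule_format, of 0] by (simp add: p)
  then have "0 < x" and "Gmap p = (1 / x - real (a 0), y / x)"
    using Gmap_Aset by (auto simp: p Aset_iff)
  then have x_eq: "fst p = 1 / (real (a 0) + fst (Gmap p))"
    by (simp add: p)
  have "(Gmap ^^ k) (Gmap p) \<in> Aset (a (Suc k))" for k
    using Suc.prems[rule_format, of "Suc k"] by (simp only: funpow_Suc_right o_apply)
  then have "fst (Gmap p) = cfrac_tail (\<lambda>k. a (Suc k)) n (fst ((Gmap ^^ Suc n) p))"
    using Suc.IH by (simp add: funpow_Suc_right del: funpow.simps)
  then show ?case
    by (simp add: x_eq)
qed simp

lemma is_cf_value_if_funpow_Gmap_in_Aset:
  assumes "\<forall>k. (Gmap ^^ k) (x, y) \<in> Aset (a k)"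
  shows "is_cf_value a x"
proof (rule is_cf_value_if_cfrac_tail)
  show "\<forall>k. a k \<ge> 1"
    using assms Aset_index_ge_1 by blast
  fix n
  have "(Gmap ^^ n) (x, y) \<in> Tset"
    using assms Aset_subset_Tset by blast
  then show "\<exists>t. 0 \<le> t \<and> t \<le> 1 \<and> x = cfrac_tail a n t"
    using fst_eq_cfrac_tail_funpow_Gmap[OF assms, of n]
    by (intro exI[of _ "fst ((Gmap ^^ n) (x, y))"]) (auto simp: Tset_def split: prod.splits)
qed

theorem mainTheorem10:
  fixes x y :: real
  assumes "(x, y) \<in> Tset"
    and "x \<notin> \<rat> \<or> y \<notin> \<rat>"
  shows "(\<forall>k. (Gmap ^^ k) (x, y) \<noteq> (0, 0))
    \<and> ((\<forall>k. \<exists>n\<ge>1. (Gmap ^^ k) (x, y) \<in> Aset n) \<longleftrightarrow> y = 0)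
    \<and> (\<forall>a :: nat \<Rightarrow> nat. (\<forall>k. a k \<ge> 1 \<and> (Gmap ^^ k) (x, y) \<in> Aset (a k))
          \<longrightarrow> is_cf_value a x)"
proof -
  have irrational: "(x, y) \<notin> \<rat> \<times> \<rat>"
    using assms(2) by auto
  have "(Gmap ^^ k) (x, y) \<noteq> (0, 0)" for k
    using funpow_Gmap_not_Rats[OF assms(1) irrational, of k] by auto
  moreover have "(\<forall>k. \<exists>n. (Gmap ^^ k) (x, y) \<in> Aset n) \<longleftrightarrow> y = 0"
    using snd_zero_if_funpow_Gmap_in_Aset[of "(x, y)"]
      funpow_Gmap_in_Aset_if_snd_zero[OF assms(1) irrational]
    by auto
  moreover have "(\<exists>n\<ge>1. q \<in> Aset n) \<longleftrightarrow> (\<exists>n. q \<in> Aset n)" for q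
    using Aset_index_ge_1 by blast
  moreover have "is_cf_value a x" if "\<forall>k. (Gmap ^^ k) (x, y) \<in> Aset (a k)" for a
    using is_cf_value_if_funpow_Gmap_in_Aset that .
  ultimately show ?thesis
    by blast
qed

end
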